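(* Let $r \ge 1$, and for $i=1,\dots,r$ let $a_i = n_i\sigma_i > 0$ and $s_i \ge 0$ be the current sample size of stratum $i$. Let $Q[1..r]$ be an array of triples $(x,y,z)$ with $Q[i]$ initialized to $(i,\, n_i\sigma_i,\, s_i/(n_i\sigma_i))$, and then sorted in ascending order of the $z$ component (ties broken arbitrarily). Let $M > 0$ be any memory budget. If at least one stratum is not oversized under budget $M$, then the set of strata that are not oversized under budget $M$ is exactly $\{Q[1].x, Q[2].x, \dots, Q[p].x\}$ for some $p \in \{1,\dots,r\}$, i.e. it occupies a contiguous prefix of the sorted array $Q$.
   Context: Under a memory budget $M$, the Neyman allocation size of stratum $i$ is $M_i = M\cdot n_i\sigma_i/\sum_{j=1}^r n_j\sigma_j$. Stratum $i$ (with current sample size $s_i$) is called oversized under budget $M$ if $s_i > M_i$, and not oversized otherwise. *)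

theory Defs
  imports Complex_Main "HOL-Library.Multiset"
begin

definition neyman_size :: "real \<Rightarrow> (nat \<Rightarrow> nat) \<Rightarrow> (nat \<Rightarrow> real) \<Rightarrow> nat \<Rightarrow> nat \<Rightarrow> real" where
  "neyman_size M n \<sigma> r i = M * (real (n i) * \<sigma> i) / (\<Sum>j\<in>{1..r}. real (n j) * \<sigma> j)"

definition oversized :: "real \<Rightarrow> (nat \<Rightarrow> nat) \<Rightarrow> (nat \<Rightarrow> real) \<Rightarrow> (nat \<Rightarrow> real) \<Rightarrow> nat \<Rightarrow> nat \<Rightarrow> bool" where
  "oversized M n \<sigma> s r i \<longleftrightarrow> s i > neyman_size M n \<sigma> r i"

end

theory Submission
  imports Defs
begin

text \<open>Stratum i is not oversized iff its ratio s i / (n i \<sigma> i) is at most the common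
  threshold M / \<Sum>j. n j \<sigma> j. The array Q is sorted by exactly these ratios, and in a list
  sorted by a key the elements whose key lies below a threshold form a prefix.\<close>

lemma sorted_takeWhile_key_le_eq_filter:
  fixes f :: "'a \<Rightarrow> 'b::linorder"
  assumes "sorted (map f xs)"
  shows "takeWhile (\<lambda>x. f x \<le> c) xs = filter (\<lambda>x. f x \<le> c) xs"
  using assms
proof (induction xs)
  case Nil
  then show ?case by simp
next
  case (Cons x xs)
  show ?case
  proof (cases "f x \<le> c")
    case True
    with Cons show ?thesis by simp
  next
    case False
    have "\<not> f y \<le> c" if "y \<in> set xs" for y
      using Cons.prems that False by auto
    with False show ?thesis by (simp add: filter_False)
  qed
qed

lemma image_set_take_eq_nth_prefix:
  assumes "p \<le> length xs"
  shows "g ` set (take p xs) = {g (xs ! (k - 1)) | k. k \<in> {1..p}}"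
proof -
  have "set (take p xs) = (!) xs ` {0..<p}"
    using nth_image[OF assms] by simp
  also have "{0..<p} = (\<lambda>k. k - 1) ` {1..p}"
    by (auto intro!: rev_image_eqI[of "Suc _"])
  finally have "set (take p xs) = (\<lambda>k. xs ! (k - 1)) ` {1..p}"
    by (simp add: image_comp comp_def)
  then show ?thesis by auto
qed

lemma not_oversized_iff_ratio_le:
  assumes "real (n i) * \<sigma> i > 0"
  shows "\<not> oversized M n \<sigma> s r i \<longleftrightarrow>
    s i / (real (n i) * \<sigma> i) \<le> M / (\<Sum>j\<in>{1..r}. real (n j) * \<sigma> j)"
  using assms unfolding oversized_def neyman_size_def
  by (simp add: not_less pos_divide_le_eq mult.commute)

theorem lemma4:
  fixes r :: nat and n :: "nat \<Rightarrow> nat" and \<sigma> s :: "nat \<Rightarrow> real" and M :: real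
    and Q :: "(nat \<times> real \<times> real) list"
  assumes "r \<ge> 1"
    and "\<And>i. i \<in> {1..r} \<Longrightarrow> real (n i) * \<sigma> i > 0"
    and "\<And>i. i \<in> {1..r} \<Longrightarrow> s i \<ge> 0"
    and "mset Q = mset (map (\<lambda>i. (i, real (n i) * \<sigma> i, s i / (real (n i) * \<sigma> i))) [1..<r+1])"
    and "sorted (map (\<lambda>q. snd (snd q)) Q)"
    and "M > 0"
    and "\<exists>i\<in>{1..r}. \<not> oversized M n \<sigma> s r i"
  shows "\<exists>p\<in>{1..r}. {i\<in>{1..r}. \<not> oversized M n \<sigma> s r i} = {fst (Q ! (k - 1)) | k. k \<in> {1..p}}"
proof -
  define c where "c = M / (\<Sum>j\<in>{1..r}. real (n j) * \<sigma> j)"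
  define below where "below = (\<lambda>q :: nat \<times> real \<times> real. snd (snd q) \<le> c)"
  define p where "p = length (takeWhile below Q)"
  have set_Q: "set Q = (\<lambda>i. (i, real (n i) * \<sigma> i, s i / (real (n i) * \<sigma> i))) ` {1..r}"
    using arg_cong[OF assms(4), of set_mset] by auto
  have "length Q = r"
    using arg_cong[OF assms(4), of size] by simp
  then have "p \<le> length Q" "p \<le> r"
    unfolding p_def by (metis length_takeWhile_le)+
  have ratio: "\<not> oversized M n \<sigma> s r i \<longleftrightarrow> s i / (real (n i) * \<sigma> i) \<le> c"
    if "i \<in> {1..r}" for i
    using not_oversized_iff_ratio_le[where n=n and \<sigma>=\<sigma> and i=i, OF assms(2)[OF that]]
    unfolding c_def .
  have "filter below Q = takeWhile below Q"
    using sorted_takeWhile_key_le_eq_filter[OF assms(5)] unfolding below_def by simp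
  also have "\<dots> = take p Q"
    unfolding p_def by (rule takeWhile_eq_take)
  finally have filter_eq_prefix: "filter below Q = take p Q" .
  have "{i\<in>{1..r}. \<not> oversized M n \<sigma> s r i} = {i\<in>{1..r}. s i / (real (n i) * \<sigma> i) \<le> c}"
    using ratio by blast
  also have "\<dots> = fst ` set (filter below Q)"
    unfolding set_filter set_Q below_def by force
  also have "\<dots> = {fst (Q ! (k - 1)) | k. k \<in> {1..p}}"
    unfolding filter_eq_prefix by (rule image_set_take_eq_nth_prefix[OF \<open>p \<le> length Q\<close>])
  finally have prefix: "{i\<in>{1..r}. \<not> oversized M n \<sigma> s r i} = {fst (Q ! (k - 1)) | k. k \<in> {1..p}}" .
  with assms(7) have "p \<noteq> 0" by auto
  with \<open>p \<le> r\<close> prefix show ?thesis by auto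
qed

end
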